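(* If $p,q\in\mathbf P(S)$ for a DRC-semigroup $S$, and $pq=qp$, then (i) the meet $p\wedge q$ exists in the poset $(\mathbf P(S),\le)$ and $p\wedge q=pq=qp$; (ii) $p\,\mathscr F\,q\iff p=q$.
   Context: A DRC-semigroup is $(S,\cdot,D,R)$, $(S,\cdot)$ a semigroup, $D,R:S\to S$ with, for all $a,b$: $D(a)a=a$, $aR(a)=a$; $D(ab)=D(aD(b))$, $R(ab)=R(R(a)b)$; $D(ab)=D(a)D(ab)D(a)$, $R(ab)=R(b)R(ab)R(b)$; $R(D(a))=D(a)$, $D(R(a))=R(a)$. $\mathbf P(S)=\{D(a):a\in S\}$, partially ordered by $p\le q\iff p=pq=qp$. For $p,q\in\mathbf P(S)$: $q\theta_p=R(qp)$, $q\delta_p=D(pq)$, and $p\,\mathscr F\,q$ means $p=q\delta_p$ and $q=p\theta_q$. *)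

theory Defs
  imports Main
begin

definition drc_semigroup :: "('a \<Rightarrow> 'a \<Rightarrow> 'a) \<Rightarrow> ('a \<Rightarrow> 'a) \<Rightarrow> ('a \<Rightarrow> 'a) \<Rightarrow> bool" where
  "drc_semigroup m D R \<longleftrightarrow>
     (\<forall>a b c. m (m a b) c = m a (m b c)) \<and>
     (\<forall>a. m (D a) a = a) \<and> (\<forall>a. m a (R a) = a) \<and>
     (\<forall>a b. D (m a b) = D (m a (D b))) \<and> (\<forall>a b. R (m a b) = R (m (R a) b)) \<and>
     (\<forall>a b. D (m a b) = m (m (D a) (D (m a b))) (D a)) \<and>
     (\<forall>a b. R (m a b) = m (m (R b) (R (m a b))) (R b)) \<and>
     (\<forall>a. R (D a) = D a) \<and> (\<forall>a. D (R a) = R a)"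

definition projs :: "('a \<Rightarrow> 'a) \<Rightarrow> 'a set" where
  "projs D = range D"

definition proj_le :: "('a \<Rightarrow> 'a \<Rightarrow> 'a) \<Rightarrow> 'a \<Rightarrow> 'a \<Rightarrow> bool" where
  "proj_le m p q \<longleftrightarrow> p = m p q \<and> p = m q p"

definition is_meet :: "('a \<Rightarrow> 'a \<Rightarrow> 'a) \<Rightarrow> ('a \<Rightarrow> 'a) \<Rightarrow> 'a \<Rightarrow> 'a \<Rightarrow> 'a \<Rightarrow> bool" where
  "is_meet m D p q z \<longleftrightarrow>
     z \<in> projs D \<and> proj_le m z p \<and> proj_le m z q \<and>
     (\<forall>w\<in>projs D. proj_le m w p \<and> proj_le m w q \<longrightarrow> proj_le m w z)"

text \<open>q theta_p = R(qp),  q delta_p = D(pq).\<close>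
definition theta :: "('a \<Rightarrow> 'a \<Rightarrow> 'a) \<Rightarrow> ('a \<Rightarrow> 'a) \<Rightarrow> 'a \<Rightarrow> 'a \<Rightarrow> 'a" where
  "theta m R q p = R (m q p)"

definition delta :: "('a \<Rightarrow> 'a \<Rightarrow> 'a) \<Rightarrow> ('a \<Rightarrow> 'a) \<Rightarrow> 'a \<Rightarrow> 'a \<Rightarrow> 'a" where
  "delta m D q p = D (m p q)"

definition relF :: "('a \<Rightarrow> 'a \<Rightarrow> 'a) \<Rightarrow> ('a \<Rightarrow> 'a) \<Rightarrow> ('a \<Rightarrow> 'a) \<Rightarrow> 'a \<Rightarrow> 'a \<Rightarrow> bool" where
  "relF m D R p q \<longleftrightarrow> p = delta m D q p \<and> q = theta m R p q"

end

theory Submission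
  imports Defs
begin

text \<open>For a projection p the sandwich axiom makes D(pa) a projection below p. When p and q
commute, D(pq) = D(qp) is therefore below both p and q, which forces pq = D(pq) \<cdot> pq = D(pq):
the product is itself a projection, and then it is the meet, and the defining equations of
p F q collapse to p = pq = q.\<close>

locale drc =
  fixes mult :: "'a \<Rightarrow> 'a \<Rightarrow> 'a" (infixl "\<cdot>" 70) and D R :: "'a \<Rightarrow> 'a"
  assumes assoc: "a \<cdot> b \<cdot> c = a \<cdot> (b \<cdot> c)"
    and D_mult_self: "D a \<cdot> a = a"
    and mult_R_self: "a \<cdot> R a = a"
    and D_mult_D: "D (a \<cdot> b) = D (a \<cdot> D b)"
    and R_R_mult: "R (a \<cdot> b) = R (R a \<cdot> b)"
    and D_mult_sandwich: "D (a \<cdot> b) = D a \<cdot> D (a \<cdot> b) \<cdot> D a"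
    and R_mult_sandwich: "R (a \<cdot> b) = R b \<cdot> R (a \<cdot> b) \<cdot> R b"
    and R_D: "R (D a) = D a"
    and D_R: "D (R a) = R a"

lemma drc_semigroup_imp_drc: "drc_semigroup m D R \<Longrightarrow> drc m D R"
  unfolding drc_semigroup_def drc_def by blast

context drc
begin

lemma D_proj: "p \<in> projs D \<Longrightarrow> D p = p"
  unfolding projs_def by (metis R_D D_R imageE)

lemma proj_idem: "p \<in> projs D \<Longrightarrow> p \<cdot> p = p"
  using D_mult_self D_proj by metis

lemma D_mult_le_left:
  assumes p: "p \<in> projs D"
  shows "proj_le (\<cdot>) (D (p \<cdot> a)) p"
proof -
  define e where "e = D (p \<cdot> a)"
  have e: "e = p \<cdot> e \<cdot> p"
    using D_mult_sandwich D_proj[OF p] unfolding e_def by metis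
  have "e \<cdot> p = e" and "p \<cdot> e = e"
    using assoc proj_idem[OF p] by (metis e)+
  then show ?thesis
    unfolding proj_le_def e_def by simp
qed

lemma proj_le_mult_if_le_both:
  "proj_le (\<cdot>) w p \<Longrightarrow> proj_le (\<cdot>) w q \<Longrightarrow> proj_le (\<cdot>) w (p \<cdot> q)"
  unfolding proj_le_def by (metis assoc)

lemma mult_le_left_if_commute:
  assumes "p \<in> projs D" and "p \<cdot> q = q \<cdot> p"
  shows "proj_le (\<cdot>) (p \<cdot> q) p"
  using assms proj_idem unfolding proj_le_def by (metis assoc)

lemma D_mult_eq_mult_if_commute:
  assumes p: "p \<in> projs D" and q: "q \<in> projs D" and comm: "p \<cdot> q = q \<cdot> p"
  shows "D (p \<cdot> q) = p \<cdot> q"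
proof -
  let ?e = "D (p \<cdot> q)"
  have "?e \<cdot> p = ?e"
    using D_mult_le_left[OF p] unfolding proj_le_def by metis
  moreover have "?e \<cdot> q = ?e"
    using D_mult_le_left[OF q, of p] comm unfolding proj_le_def by metis
  ultimately show ?thesis
    using D_mult_self[of "p \<cdot> q"] assoc by metis
qed

lemma mult_is_meet_if_commute:
  assumes p: "p \<in> projs D" and q: "q \<in> projs D" and comm: "p \<cdot> q = q \<cdot> p"
  shows "is_meet (\<cdot>) D p q (p \<cdot> q)"
  unfolding is_meet_def
proof (intro conjI ballI impI)
  show "p \<cdot> q \<in> projs D"
    using D_mult_eq_mult_if_commute[OF assms] unfolding projs_def by (metis rangeI)
  show "proj_le (\<cdot>) (p \<cdot> q) p"
    using mult_le_left_if_commute[OF p comm] .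
  show "proj_le (\<cdot>) (p \<cdot> q) q"
    using mult_le_left_if_commute[OF q comm[symmetric]] comm by simp
qed (auto intro: proj_le_mult_if_le_both)

lemma relF_iff_eq_if_commute:
  assumes p: "p \<in> projs D" and q: "q \<in> projs D" and comm: "p \<cdot> q = q \<cdot> p"
  shows "relF (\<cdot>) D R p q \<longleftrightarrow> p = q"
proof -
  have "D (p \<cdot> q) = p \<cdot> q" and "R (p \<cdot> q) = p \<cdot> q"
    using D_mult_eq_mult_if_commute[OF assms] R_D by metis+
  then show ?thesis
    unfolding relF_def delta_def theta_def using proj_idem[OF p] by metis
qed

end

theorem corollary10p2:
  fixes m :: "'a \<Rightarrow> 'a \<Rightarrow> 'a" and D R :: "'a \<Rightarrow> 'a" and p q :: 'a
  assumes "drc_semigroup m D R"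
    and "p \<in> projs D" and "q \<in> projs D"
    and "m p q = m q p"
  shows "(\<exists>z. is_meet m D p q z) \<and> is_meet m D p q (m p q) \<and> is_meet m D p q (m q p)
         \<and> (relF m D R p q \<longleftrightarrow> p = q)"
proof -
  interpret drc m D R
    using assms(1) by (rule drc_semigroup_imp_drc)
  have meet: "is_meet m D p q (m p q)"
    using mult_is_meet_if_commute assms(2-4) .
  moreover have "relF m D R p q \<longleftrightarrow> p = q"
    using relF_iff_eq_if_commute assms(2-4) .
  ultimately show ?thesis
    using assms(4) by auto
qed

end
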